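(* Let $A$ be a finite cyclic group and let $(a_1,\ldots,a_k)$ be an admissible $k$-tuple in $A$. Then for every permutation $\sigma\in S_k$ there exists $\psi\in\operatorname{Aut}(A)$ with $\psi(a_i)=a_{\sigma(i)}$ for all $i$ if and only if one of the following holds: (i) there is an isomorphism $\delta:A\to\mathbb{Z}/n\mathbb{Z}$ with $k\equiv 0\pmod n$ such that $\delta(a_i)=1$ for all $i$; or (ii) $k=2$ and there is an isomorphism $\delta:A\to\mathbb{Z}/n\mathbb{Z}$ for some $n\ge 3$ such that $\delta(a_1)=1$ and $\delta(a_2)=-1$.
   Context: For a finite abelian group $A$, an admissible $k$-tuple is a tuple $(a_1,\ldots,a_k)\in(A\setminus\{0\})^k$ such that $\sum_{i=1}^k a_i=0$ and $\{a_1,\ldots,a_k\}$ is a generating set for $A$. *)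

theory Defs
  imports "HOL-Algebra.Algebra" "HOL-Combinatorics.Permutations"
begin

definition admissible :: "('a, 'b) monoid_scheme \<Rightarrow> nat \<Rightarrow> (nat \<Rightarrow> 'a) \<Rightarrow> bool" where
  "admissible G k a \<longleftrightarrow>
     (\<forall>i<k. a i \<in> carrier G \<and> a i \<noteq> \<one>\<^bsub>G\<^esub>) \<and>
     finprod G a {..<k} = \<one>\<^bsub>G\<^esub> \<and>
     generate G (a ` {..<k}) = carrier G"

end

theory Submission imports Defs begin

text \<open>Automorphisms of a cyclic group commute, so if all permutations of an admissible tuple
  are realised by automorphisms then, for three distinct indices \<open>i, j, l\<close>, applying the
  transpositions \<open>(i j)\<close> and \<open>(j l)\<close> to \<open>a\<^sub>l\<close> in either order gives \<open>a\<^sub>i = a\<^sub>j\<close>. Hence for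
  \<open>k \<noteq> 2\<close> the tuple is constant, \<open>(g, \<dots>, g)\<close> with \<open>g\<close> a generator of order dividing \<open>k\<close>;
  sending \<open>g\<close> to \<open>1\<close> gives (i). For \<open>k = 2\<close> the tuple is \<open>(g, g\<inverse>)\<close>, realised by inversion,
  and \<open>g \<noteq> g\<inverse>\<close> forces the order to be at least \<open>3\<close>, giving (ii). Conversely, (i) says the
  tuple is constant and (ii) says it is an inverse pair.\<close>

definition aut_symmetric :: "('a, 'b) monoid_scheme \<Rightarrow> nat \<Rightarrow> (nat \<Rightarrow> 'a) \<Rightarrow> bool" where
  "aut_symmetric G k a \<longleftrightarrow>
     (\<forall>\<sigma>. \<sigma> permutes {..<k} \<longrightarrow> (\<exists>\<psi> \<in> iso G G. \<forall>i<k. \<psi> (a i) = a (\<sigma> i)))"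

lemma (in group) ord_generator:
  assumes "g \<in> carrier G" and "generate G {g} = carrier G"
  shows "ord g = order G"
  using generate_pow_card[OF assms(1)] assms(2) by (simp add: order_def)

lemma (in group) iso_integer_mod_group_generator:
  assumes fin: "finite (carrier G)" and g: "g \<in> carrier G" and gen: "generate G {g} = carrier G"
  shows "\<exists>\<delta> \<in> iso G (integer_mod_group (order G)). \<delta> g = 1 mod int (order G)"
proof -
  define n where "n = order G"
  define h where "h = (\<lambda>m::int. g [^] m)"
  have "n > 0"
    using fin g by (auto simp: n_def order_def card_gt_0_iff)
  then have carrier_Zn: "carrier (integer_mod_group n) = {0..<int n}"
    by (simp add: carrier_integer_mod_group)
  have h_eq: "h x = h y \<longleftrightarrow> int n dvd (y - x)" for x y
    unfolding h_def n_def using int_pow_eq[OF g] ord_generator[OF g gen] by simp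
  have h_mod: "h (x mod int n) = h x" for x
    using h_eq by (simp flip: mod_eq_dvd_iff)
  have inj: "inj_on h {0..<int n}"
  proof (rule inj_onI)
    fix x y assume "x \<in> {0..<int n}" "y \<in> {0..<int n}" "h x = h y"
    then show "x = y"
      using h_eq[of x y] by (metis atLeastLessThan_iff mod_eq_dvd_iff mod_pos_pos_trivial)
  qed
  have "h ` {0..<int n} \<subseteq> carrier G" "card (h ` {0..<int n}) = order G"
    using g card_image[OF inj] by (auto simp: h_def n_def)
  then have "h ` {0..<int n} = carrier G"
    using card_subset_eq[OF fin] by (simp add: order_def)
  then have "bij_betw h (carrier (integer_mod_group n)) (carrier G)"
    using inj carrier_Zn by (simp add: bij_betw_def)
  moreover have "h \<in> hom (integer_mod_group n) G"
    by (rule homI) (auto simp: h_mod, auto simp: h_def g int_pow_mult)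
  ultimately have "h \<in> iso (integer_mod_group n) G"
    by (simp add: iso_def)
  then have "inv_into (carrier (integer_mod_group n)) h \<in> iso G (integer_mod_group n)"
    by (rule group.iso_set_sym[OF group_integer_mod_group])
  moreover have "inv_into (carrier (integer_mod_group n)) h g = 1 mod int n"
  proof -
    have "h (1 mod int n) = g"
      using g by (simp add: h_mod, simp add: h_def)
    moreover have "1 mod int n \<in> carrier (integer_mod_group n)"
      using \<open>n > 0\<close> carrier_Zn by simp
    ultimately show ?thesis
      using inv_into_f_f[OF inj] carrier_Zn by metis
  qed
  ultimately show ?thesis
    unfolding n_def by blast
qed

lemma (in group) cyclic_group_endomorphisms_commute:
  assumes "cyclic_group G" and f: "f \<in> hom G G" and h: "h \<in> hom G G" and x: "x \<in> carrier G"
  shows "f (h x) = h (f x)"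
proof -
  obtain g where g: "g \<in> carrier G" and powers: "carrier G = range (\<lambda>m::int. g [^] m)"
    using assms(1) cyclic_group by blast
  have pow_image: "\<phi> (g [^] (m::int)) = \<phi> g [^] m" if "\<phi> \<in> hom G G" for \<phi> m
    using hom_int_pow[OF that g is_group is_group] .
  obtain u v m where "f g = g [^] (u::int)" "h g = g [^] (v::int)" "x = g [^] (m::int)"
    using f h x g powers by (metis hom_in_carrier rangeE)
  then have "f (h x) = g [^] (u * (v * m))" "h (f x) = g [^] (v * (u * m))"
    using f h g by (simp_all add: pow_image int_pow_pow)
  then show ?thesis
    by (simp add: ac_simps)
qed

lemma (in comm_group) inv_in_iso: "(\<lambda>x. inv x) \<in> iso G G"
proof -
  have "(\<lambda>x. inv x) \<in> hom G G"
    by (rule homI) (auto simp: inv_mult)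
  moreover have "bij_betw (\<lambda>x. inv x) (carrier G) (carrier G)"
    by (rule bij_betwI[where g="\<lambda>x. inv x"]) auto
  ultimately show ?thesis
    by (simp add: iso_def)
qed

lemma aut_symmetric_constant:
  assumes "\<forall>i<k. \<forall>j<k. a i = a j"
  shows "aut_symmetric G k a"
  unfolding aut_symmetric_def
proof (intro allI impI)
  fix \<sigma> assume "\<sigma> permutes {..<k}"
  then have "\<forall>i<k. a i = a (\<sigma> i)"
    using assms permutes_in_image[of \<sigma> "{..<k}"] by (meson lessThan_iff)
  then show "\<exists>\<psi> \<in> iso G G. \<forall>i<k. \<psi> (a i) = a (\<sigma> i)"
    by (intro bexI[OF _ iso_set_refl]) blast
qed

lemma (in comm_group) aut_symmetric_inverse_pair:
  assumes "a 0 \<in> carrier G" and "a 1 = inv (a 0)"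
  shows "aut_symmetric G 2 a"
  unfolding aut_symmetric_def
proof (intro allI impI)
  fix \<sigma> :: "nat \<Rightarrow> nat" assume \<sigma>: "\<sigma> permutes {..<2}"
  have "\<sigma> 0 < 2" "\<sigma> 1 < 2" "\<sigma> 0 \<noteq> \<sigma> 1"
    using permutes_in_image[OF \<sigma>] permutes_inj_on[OF \<sigma>] by (auto dest: inj_onD)
  then consider "\<sigma> 0 = 0" "\<sigma> 1 = 1" | "\<sigma> 0 = 1" "\<sigma> 1 = 0"
    by linarith
  moreover have "i < 2 \<Longrightarrow> i = 0 \<or> i = 1" for i :: nat
    by auto
  ultimately show "\<exists>\<psi> \<in> iso G G. \<forall>i<2. \<psi> (a i) = a (\<sigma> i)"
    using assms iso_set_refl[of G] inv_in_iso by cases (metis, metis inv_inv One_nat_def)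
qed

lemma (in group) aut_symmetric_cyclic_entries_equal:
  assumes "cyclic_group G" and sym: "aut_symmetric G k a" and a: "a \<in> {..<k} \<rightarrow> carrier G"
    and "k \<noteq> 2" and i: "i < k" and j: "j < k"
  shows "a i = a j"
proof (rule ccontr)
  assume ne: "a i \<noteq> a j"
  then have "i \<noteq> j" by auto
  then have "k \<ge> 3"
    using \<open>k \<noteq> 2\<close> i j by linarith
  define l where "l = (if 0 \<notin> {i, j} then 0 else if 1 \<notin> {i, j} then 1 else (2::nat))"
  have l: "l < k" "l \<noteq> i" "l \<noteq> j"
    using \<open>k \<ge> 3\<close> \<open>i \<noteq> j\<close> by (auto simp: l_def)
  obtain \<psi>\<^sub>1 where \<psi>\<^sub>1: "\<psi>\<^sub>1 \<in> iso G G" "\<forall>m<k. \<psi>\<^sub>1 (a m) = a (Transposition.transpose i j m)"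
    using sym i j by (auto simp: aut_symmetric_def intro: permutes_swap_id)
  obtain \<psi>\<^sub>2 where \<psi>\<^sub>2: "\<psi>\<^sub>2 \<in> iso G G" "\<forall>m<k. \<psi>\<^sub>2 (a m) = a (Transposition.transpose j l m)"
    using sym j l by (auto simp: aut_symmetric_def intro: permutes_swap_id)
  have "\<psi>\<^sub>1 (\<psi>\<^sub>2 (a l)) = \<psi>\<^sub>2 (\<psi>\<^sub>1 (a l))"
    using cyclic_group_endomorphisms_commute[OF assms(1)] \<psi>\<^sub>1(1) \<psi>\<^sub>2(1) a l(1)
    by (auto simp: iso_def)
  moreover have "\<psi>\<^sub>1 (\<psi>\<^sub>2 (a l)) = a i" "\<psi>\<^sub>2 (\<psi>\<^sub>1 (a l)) = a j"
    using \<psi>\<^sub>1 \<psi>\<^sub>2 l i j by simp_all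
  ultimately show False
    using ne by simp
qed

lemma (in comm_group) admissible_pair:
  assumes "admissible G 2 a"
  shows "a 0 \<in> carrier G" and "a 1 = inv\<^bsub>G\<^esub> (a 0)" and "generate G {a 0} = carrier G"
proof -
  have a: "a 0 \<in> carrier G" "a 1 \<in> carrier G" "a 0 \<otimes> a 1 = \<one>"
    and gen: "generate G {a 0, a 1} = carrier G"
    using assms by (auto simp: admissible_def numeral_2_eq_2 lessThan_Suc insert_commute)
  show "a 0 \<in> carrier G" using a by simp
  show inv: "a 1 = inv (a 0)"
    using a inv_equality m_comm by metis
  have "generate G {a 0, a 1} \<subseteq> generate G {a 0}"
    using a inv generate_subgroup_incl[OF _ generate_is_subgroup]
      generate.incl[of "a 0" "{a 0}" G] generate.inv[of "a 0" "{a 0}" G]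
    by auto
  then show "generate G {a 0} = carrier G"
    using gen generate_incl[of "{a 0}"] a by auto
qed

lemma (in comm_group) admissible_constant:
  assumes "admissible G k a" and "\<forall>i<k. \<forall>j<k. a i = a j"
  obtains g where "g \<in> carrier G" "generate G {g} = carrier G" "g [^]\<^bsub>G\<^esub> k = \<one>\<^bsub>G\<^esub>"
    "\<forall>i<k. a i = g"
proof -
  define g where "g = (if k = 0 then \<one> else a 0)"
  have adm: "\<forall>i<k. a i \<in> carrier G" "finprod G a {..<k} = \<one>" "generate G (a ` {..<k}) = carrier G"
    using assms(1) by (auto simp: admissible_def)
  have a_eq: "\<forall>i<k. a i = g"
  proof (intro allI impI)
    fix i assume "i < k"
    then have "a i = a 0"
      using assms(2) by blast
    then show "a i = g"
      using \<open>i < k\<close> by (simp add: g_def)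
  qed
  have g: "g \<in> carrier G"
    using adm(1) by (simp add: g_def)
  have "generate G {g} = carrier G"
  proof (cases "k = 0")
    case True
    then show ?thesis
      using adm(3) generate_one generate_empty by (simp add: g_def)
  next
    case False
    then have "a ` {..<k} = {g}"
      using a_eq by auto
    then show ?thesis
      using adm(3) by simp
  qed
  moreover have "finprod G a {..<k} = finprod G (\<lambda>_. g) {..<k}"
    by (rule finprod_cong') (simp_all add: a_eq g)
  then have "g [^] k = \<one>"
    using adm(2) finprod_const[OF g, of "{..<k}"] by simp
  ultimately show ?thesis
    using that g a_eq by blast
qed

lemma (in comm_group) admissible_constant_iso_integer_mod_group:
  assumes "finite (carrier G)" and "admissible G k a"
    and "\<forall>i<k. \<forall>j<k. a i = a j"
  shows "\<exists>(n::nat) \<delta>. n > 0 \<and> \<delta> \<in> iso G (integer_mod_group n) \<and> k mod n = 0 \<and>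
           (\<forall>i<k. \<delta> (a i) = 1 mod int n)"
proof -
  obtain g where g: "g \<in> carrier G" "generate G {g} = carrier G" "g [^] k = \<one>" "\<forall>i<k. a i = g"
    using admissible_constant assms(2,3) by blast
  obtain \<delta> where \<delta>: "\<delta> \<in> iso G (integer_mod_group (order G))" "\<delta> g = 1 mod int (order G)"
    using iso_integer_mod_group_generator assms(1) g(1,2) by blast
  have "order G dvd k"
    using g pow_eq_id ord_generator by metis
  moreover have "order G > 0"
    using assms(1) g(1) by (auto simp: order_def card_gt_0_iff)
  ultimately show ?thesis
    using \<delta> g(4) by (intro exI[where x="order G"] exI[where x=\<delta>]) simp
qed

lemma (in comm_group) admissible_pair_iso_integer_mod_group:
  assumes "finite (carrier G)" and "admissible G 2 a" and "a 0 \<noteq> a 1"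
  shows "\<exists>(n::nat) \<delta>. n \<ge> 3 \<and> \<delta> \<in> iso G (integer_mod_group n) \<and>
           \<delta> (a 0) = 1 mod int n \<and> \<delta> (a 1) = (-1) mod int n"
proof -
  have a: "a 0 \<in> carrier G" "a 1 = inv (a 0)" "generate G {a 0} = carrier G"
    using admissible_pair assms(2) by blast+
  have "\<not> order G dvd 2"
  proof
    assume "order G dvd 2"
    then have "a 0 [^] (2::nat) = \<one>"
      using pow_eq_id[OF a(1)] ord_generator[OF a(1,3)] by simp
    then have "a 0 \<otimes> a 0 = \<one>"
      using a(1) by (simp add: numeral_2_eq_2 nat_pow_Suc2)
    then show False
      using a(1,2) assms(3) inv_equality by metis
  qed
  moreover have "order G > 0"
    using assms(1) a(1) by (auto simp: order_def card_gt_0_iff)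
  ultimately have n3: "order G \<ge> 3"
    by (cases "order G = 1 \<or> order G = 2") auto
  obtain \<delta> where \<delta>: "\<delta> \<in> iso G (integer_mod_group (order G))" "\<delta> (a 0) = 1 mod int (order G)"
    using iso_integer_mod_group_generator assms(1) a(1,3) by blast
  then interpret group_hom G "integer_mod_group (order G)" \<delta>
    by (simp add: group_hom_def group_hom_axioms_def iso_def is_group)
  have "\<delta> (a 1) = (-1) mod int (order G)"
    using a(1,2) \<delta>(2) n3 by (simp add: carrier_integer_mod_group)
  then show ?thesis
    using n3 \<delta> by blast
qed

lemma iso_image_constant_imp_equal:
  assumes "\<delta> \<in> iso G H" and "a \<in> {..<k} \<rightarrow> carrier G" and "\<forall>i<k. \<delta> (a i) = c"
  shows "\<forall>i<k. \<forall>j<k. a i = a j"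
proof (intro allI impI)
  fix i j assume "i < k" "j < k"
  moreover have "inj_on \<delta> (carrier G)"
    using assms(1) by (simp add: iso_def bij_betw_def)
  ultimately show "a i = a j"
    using assms(2,3) by (metis funcset_mem inj_onD lessThan_iff)
qed

theorem lemma2p2:
  fixes G :: "('a, 'b) monoid_scheme" and k :: nat and a :: "nat \<Rightarrow> 'a"
  assumes "comm_group G" and "finite (carrier G)" and "cyclic_group G"
    and "admissible G k a"
  shows "(\<forall>\<sigma>. \<sigma> permutes {..<k} \<longrightarrow>
            (\<exists>\<psi> \<in> iso G G. \<forall>i<k. \<psi> (a i) = a (\<sigma> i)))
     \<longleftrightarrow>
     ((\<exists>(n::nat) \<delta>. n > 0 \<and> \<delta> \<in> iso G (integer_mod_group n) \<and> k mod n = 0 \<and>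
          (\<forall>i<k. \<delta> (a i) = 1 mod int n))
      \<or>
      (k = 2 \<and> (\<exists>(n::nat) \<delta>. n \<ge> 3 \<and> \<delta> \<in> iso G (integer_mod_group n) \<and>
          \<delta> (a 0) = 1 mod int n \<and> \<delta> (a 1) = (-1) mod int n)))"
    (is "_ \<longleftrightarrow> ?constant \<or> ?pair")
proof -
  interpret comm_group G by fact
  have a: "a \<in> {..<k} \<rightarrow> carrier G"
    using assms(4) by (auto simp: admissible_def)
  have "aut_symmetric G k a \<longleftrightarrow> ?constant \<or> ?pair"
  proof
    assume sym: "aut_symmetric G k a"
    show "?constant \<or> ?pair"
    proof (cases "k = 2 \<and> a 0 \<noteq> a 1")
      case True
      then show ?thesis
        using admissible_pair_iso_integer_mod_group assms(2,4) by blast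
    next
      case False
      then have "\<forall>i<k. \<forall>j<k. a i = a j"
        using aut_symmetric_cyclic_entries_equal[OF assms(3) sym a]
        by (metis One_nat_def less_2_cases_iff)
      then show ?thesis
        using admissible_constant_iso_integer_mod_group assms(2,4) by blast
    qed
  next
    assume "?constant \<or> ?pair"
    then show "aut_symmetric G k a"
    proof
      assume ?constant
      then show ?thesis
        using iso_image_constant_imp_equal[OF _ a] aut_symmetric_constant by metis
    next
      assume ?pair
      then show ?thesis
        using admissible_pair assms(4) aut_symmetric_inverse_pair by auto
    qed
  qed
  then show ?thesis
    by (simp add: aut_symmetric_def)
qed

end
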